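(* Let $r,s,t,a,b,c$ be real numbers with $t\neq0$, and let $H_n^{(3)}$ and $h_n^{(3)}$ be the third-order Horadam and generalized Tribonacci numbers defined in the context. Then for every integer $n\ge0$, $$\big(H_{n+2}^{(3)}\big)^{2}+s\big(H_{n+1}^{(3)}\big)^{2}+2tH_{n}^{(3)}H_{n+1}^{(3)}=(c^{2}+sb^{2}+2tab)h_{2n+1}^{(3)}+\big(b^{2}(t-rs)+2tac+2sbc-2rtab\big)h_{2n}^{(3)}+t(ta^{2}-rb^{2}+2bc)h_{2n-1}^{(3)}$$ $$=cH_{2n+2}^{(3)}+(sb+ta)H_{2n+1}^{(3)}+tbH_{2n}^{(3)}.$$
   Context: Third-order Horadam numbers: $H_0^{(3)}=a$, $H_1^{(3)}=b$, $H_2^{(3)}=c$, $H_{n+3}^{(3)}=rH_{n+2}^{(3)}+sH_{n+1}^{(3)}+tH_n^{(3)}$ for $n\ge0$. Generalized Tribonacci numbers: $h_0^{(3)}=0$, $h_1^{(3)}=1$, $h_2^{(3)}=r$, $h_{n+3}^{(3)}=rh_{n+2}^{(3)}+sh_{n+1}^{(3)}+th_n^{(3)}$ for $n\ge0$; the value $h_{-1}^{(3)}$ (needed for $n=0$) is obtained by running the recurrence backwards, giving $h_{-1}^{(3)}=0$. *)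

theory Defs
  imports Complex_Main
begin

fun horadam3 :: "real \<Rightarrow> real \<Rightarrow> real \<Rightarrow> real \<Rightarrow> real \<Rightarrow> real \<Rightarrow> nat \<Rightarrow> real" where
  "horadam3 r s t a b c 0 = a"
| "horadam3 r s t a b c (Suc 0) = b"
| "horadam3 r s t a b c (Suc (Suc 0)) = c"
| "horadam3 r s t a b c (Suc (Suc (Suc n))) =
     r * horadam3 r s t a b c (Suc (Suc n)) + s * horadam3 r s t a b c (Suc n) + t * horadam3 r s t a b c n"

fun trib3 :: "real \<Rightarrow> real \<Rightarrow> real \<Rightarrow> nat \<Rightarrow> real" where
  "trib3 r s t 0 = 0"
| "trib3 r s t (Suc 0) = 1"
| "trib3 r s t (Suc (Suc 0)) = r"
| "trib3 r s t (Suc (Suc (Suc n))) =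
     r * trib3 r s t (Suc (Suc n)) + s * trib3 r s t (Suc n) + t * trib3 r s t n"

text \<open>trib3_pred r s t k = h_{k-1}, using h_{-1} = 0 (obtained by running the
  recurrence backwards, as in the paper) for k = 0.\<close>
definition trib3_pred :: "real \<Rightarrow> real \<Rightarrow> real \<Rightarrow> nat \<Rightarrow> real" where
  "trib3_pred r s t k = (if k = 0 then 0 else trib3 r s t (k - 1))"

end

theory Submission
  imports Defs
begin

text \<open>For two solutions G, F of the recurrence, the pairing
  B(m,n) = G(m+2) F(n+2) + s G(m+1) F(n+1) + t (G(m) F(n+1) + G(m+1) F(n))
  does not change when an index is moved from m to n, so it depends only on m + n.
  With G = F = H, the equality B(n,n) = B(0,2n) is the outer identity; with F(k) = h(k-1),
  B(k,0) = B(0,k) expresses every solution through the Tribonacci numbers.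
  The right-hand side K(m) = c H(m+2) + (sb+ta) H(m+1) + tb H(m) is again a solution, namely the
  Horadam sequence L with initial values b^2+2ac-2rab-sa^2, ta^2-rb^2+2bc, c^2+sb^2+2tab shifted
  by two (they are B(-1,-1), B(-1,0), B(0,0) for H continued backwards by H(-1) = (c-rb-sa)/t,
  whose denominator cancels); expanding L(2n+2) through the Tribonacci numbers gives the middle
  expression.\<close>

definition rec3 :: "real \<Rightarrow> real \<Rightarrow> real \<Rightarrow> (nat \<Rightarrow> real) \<Rightarrow> bool" where
  "rec3 r s t G \<longleftrightarrow> (\<forall>k. G (k + 3) = r * G (k + 2) + s * G (k + 1) + t * G k)"

lemma rec3_horadam3: "rec3 r s t (horadam3 r s t a b c)"
  by (simp add: rec3_def numeral_eq_Suc)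

lemma rec3_trib3_pred: "rec3 r s t (trib3_pred r s t)"
  unfolding rec3_def
proof
  fix k
  show "trib3_pred r s t (k + 3) = r * trib3_pred r s t (k + 2) + s * trib3_pred r s t (k + 1)
          + t * trib3_pred r s t k"
    by (cases k) (simp_all add: trib3_pred_def numeral_eq_Suc)
qed

lemma rec3_Suc:
  assumes "rec3 r s t G"
  shows "G (Suc (Suc (Suc k))) = r * G (Suc (Suc k)) + s * G (Suc k) + t * G k"
  using assms unfolding rec3_def by (simp add: numeral_eq_Suc)

lemma rec3_shift_comb:
  assumes "rec3 r s t G"
  shows "rec3 r s t (\<lambda>k. x * G (k + 2) + y * G (k + 1) + z * G k)"
  unfolding rec3_def
proof
  fix k
  show "x * G (k + 3 + 2) + y * G (k + 3 + 1) + z * G (k + 3)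
      = r * (x * G (k + 2 + 2) + y * G (k + 2 + 1) + z * G (k + 2))
        + s * (x * G (k + 1 + 2) + y * G (k + 1 + 1) + z * G (k + 1))
        + t * (x * G (k + 2) + y * G (k + 1) + z * G k)"
    using rec3_Suc[OF assms, of k] rec3_Suc[OF assms, of "Suc k"] rec3_Suc[OF assms, of "Suc (Suc k)"]
    by (simp add: numeral_eq_Suc algebra_simps)
qed

lemma rec3_unique:
  assumes "rec3 r s t G" and "rec3 r s t F"
    and "G 0 = F 0" and "G 1 = F 1" and "G 2 = F 2"
  shows "G = F"
proof
  fix k
  have "G k = F k \<and> G (Suc k) = F (Suc k) \<and> G (Suc (Suc k)) = F (Suc (Suc k))"
  proof (induction k)
    case 0
    then show ?case using assms(3-5) by (simp add: numeral_eq_Suc)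
  next
    case (Suc k)
    then show ?case using rec3_Suc[OF assms(1)] rec3_Suc[OF assms(2)] by simp
  qed
  then show "G k = F k" by simp
qed

definition rec3_pairing ::
    "real \<Rightarrow> real \<Rightarrow> (nat \<Rightarrow> real) \<Rightarrow> (nat \<Rightarrow> real) \<Rightarrow> nat \<Rightarrow> nat \<Rightarrow> real" where
  "rec3_pairing s t G F m n =
     G (m + 2) * F (n + 2) + s * G (m + 1) * F (n + 1) + t * (G m * F (n + 1) + G (m + 1) * F n)"

lemma rec3_pairing_Suc:
  assumes "rec3 r s t G" and "rec3 r s t F"
  shows "rec3_pairing s t G F (Suc m) n = rec3_pairing s t G F m (Suc n)"
  using assms[unfolded rec3_def, rule_format, of m] assms[unfolded rec3_def, rule_format, of n]
  unfolding rec3_pairing_def by (simp add: numeral_eq_Suc algebra_simps)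

lemma rec3_pairing_sum:
  assumes "rec3 r s t G" and "rec3 r s t F"
  shows "rec3_pairing s t G F m n = rec3_pairing s t G F 0 (m + n)"
proof (induction m arbitrary: n)
  case (Suc m)
  then show ?case using rec3_pairing_Suc[OF assms, of m n] by simp
qed simp

lemma rec3_expansion:
  assumes "rec3 r s t G"
  shows "G (k + 2) = G 2 * trib3_pred r s t (k + 2) + (s * G 1 + t * G 0) * trib3_pred r s t (k + 1)
           + t * G 1 * trib3_pred r s t k"
proof -
  have "rec3_pairing s t G (trib3_pred r s t) k 0 = rec3_pairing s t G (trib3_pred r s t) 0 k"
    using rec3_pairing_sum[OF assms rec3_trib3_pred, of k 0] by simp
  then show ?thesis
    by (simp add: rec3_pairing_def trib3_pred_def numeral_eq_Suc algebra_simps)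
qed

lemma horadam3_square_sum:
  fixes r s t a b c :: real
  defines "H \<equiv> horadam3 r s t a b c"
  shows "(H (n + 2))\<^sup>2 + s * (H (n + 1))\<^sup>2 + 2 * t * H n * H (n + 1)
           = c * H (2 * n + 2) + (s * b + t * a) * H (2 * n + 1) + t * b * H (2 * n)"
proof -
  have "rec3_pairing s t H H n n = rec3_pairing s t H H 0 (2 * n)"
    using rec3_pairing_sum[OF rec3_horadam3 rec3_horadam3] unfolding H_def mult_2 .
  then show ?thesis
    by (simp add: H_def rec3_pairing_def numeral_eq_Suc power2_eq_square algebra_simps)
qed

lemma horadam3_square_sequence:
  fixes r s t a b c :: real
  defines "H \<equiv> horadam3 r s t a b c"
    and "L \<equiv> horadam3 r s t (b\<^sup>2 + 2 * a * c - 2 * r * a * b - s * a\<^sup>2)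
                              (t * a\<^sup>2 - r * b\<^sup>2 + 2 * b * c) (c\<^sup>2 + s * b\<^sup>2 + 2 * t * a * b)"
  shows "L (m + 2) = c * H (m + 2) + (s * b + t * a) * H (m + 1) + t * b * H m"
proof -
  have "(\<lambda>m. L (m + 2)) = (\<lambda>m. c * H (m + 2) + (s * b + t * a) * H (m + 1) + t * b * H m)"
  proof (rule rec3_unique)
    show "rec3 r s t (\<lambda>m. L (m + 2))"
      using rec3_shift_comb[OF rec3_horadam3, where x = 1 and y = 0 and z = 0] by (simp add: L_def)
    show "rec3 r s t (\<lambda>m. c * H (m + 2) + (s * b + t * a) * H (m + 1) + t * b * H m)"
      unfolding H_def by (rule rec3_shift_comb[OF rec3_horadam3])
  qed (simp_all add: H_def L_def numeral_eq_Suc power2_eq_square algebra_simps)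
  then show ?thesis by (rule fun_cong)
qed

theorem corollary3p5:
  fixes r s t a b c :: real and n :: nat
  assumes "t \<noteq> 0"
  shows "(horadam3 r s t a b c (n + 2))^2 + s * (horadam3 r s t a b c (n + 1))^2
           + 2 * t * horadam3 r s t a b c n * horadam3 r s t a b c (n + 1)
         = (c^2 + s * b^2 + 2 * t * a * b) * trib3 r s t (2 * n + 1)
           + (b^2 * (t - r * s) + 2 * t * a * c + 2 * s * b * c - 2 * r * t * a * b) * trib3 r s t (2 * n)
           + t * (t * a^2 - r * b^2 + 2 * b * c) * trib3_pred r s t (2 * n)
       \<and> (c^2 + s * b^2 + 2 * t * a * b) * trib3 r s t (2 * n + 1)
           + (b^2 * (t - r * s) + 2 * t * a * c + 2 * s * b * c - 2 * r * t * a * b) * trib3 r s t (2 * n)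
           + t * (t * a^2 - r * b^2 + 2 * b * c) * trib3_pred r s t (2 * n)
         = c * horadam3 r s t a b c (2 * n + 2) + (s * b + t * a) * horadam3 r s t a b c (2 * n + 1)
           + t * b * horadam3 r s t a b c (2 * n)"
proof -
  let ?L = "horadam3 r s t (b\<^sup>2 + 2 * a * c - 2 * r * a * b - s * a\<^sup>2)
                          (t * a\<^sup>2 - r * b\<^sup>2 + 2 * b * c) (c\<^sup>2 + s * b\<^sup>2 + 2 * t * a * b)"
  have trib3: "trib3 r s t k = trib3_pred r s t (k + 1)" for k
    by (simp add: trib3_pred_def)
  have "(c^2 + s * b^2 + 2 * t * a * b) * trib3 r s t (2 * n + 1)
           + (b^2 * (t - r * s) + 2 * t * a * c + 2 * s * b * c - 2 * r * t * a * b) * trib3 r s t (2 * n)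
           + t * (t * a^2 - r * b^2 + 2 * b * c) * trib3_pred r s t (2 * n)
        = ?L (2 * n + 2)"
    using rec3_expansion[OF rec3_horadam3, of r s t _ _ _ "2 * n"]
    by (simp add: trib3 numeral_eq_Suc algebra_simps)
  also have "\<dots> = c * horadam3 r s t a b c (2 * n + 2) + (s * b + t * a) * horadam3 r s t a b c (2 * n + 1)
           + t * b * horadam3 r s t a b c (2 * n)"
    by (rule horadam3_square_sequence)
  finally show ?thesis using horadam3_square_sum by simp
qed

end
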